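(* Let $R$ be a discrete valuation domain with maximal ideal $P=Rp$. Then, up to isomorphism, the indecomposable pseudo-absorbing primary multiplication $R$-modules are exactly: (1) $R$; (2) $R/P^n$ for $n\geq1$.
   Context: A proper ideal $I$ of a commutative ring $A$ is 2-absorbing primary if whenever $a,b,c\in A$ and $abc\in I$ then $ab\in I$ or $ac\in\sqrt I$ or $bc\in\sqrt I$. A proper submodule $N$ of an $A$-module $M$ is pseudo-absorbing primary if $(N:_AM)=\{r\in A:rM\subseteq N\}$ is a 2-absorbing primary ideal of $A$. $M$ is a pseudo-absorbing primary multiplication module if for every pseudo-absorbing primary submodule $N$ of $M$ there is an ideal $I$ of $A$ with $N=IM$. *)

theory Defs
  imports "HOL-Algebra.Algebra"
begin

definition DVR :: "('a, 'c) ring_scheme \<Rightarrow> bool" where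
  "DVR R \<longleftrightarrow> principal_domain R \<and> (\<exists>!P. primeideal P R \<and> P \<noteq> {\<zero>\<^bsub>R\<^esub>})"

definition ideal_radical :: "('a, 'c) ring_scheme \<Rightarrow> 'a set \<Rightarrow> 'a set" where
  "ideal_radical R I = {r \<in> carrier R. \<exists>n::nat. r [^]\<^bsub>R\<^esub> n \<in> I}"

definition two_absorbing_primary :: "('a, 'c) ring_scheme \<Rightarrow> 'a set \<Rightarrow> bool" where
  "two_absorbing_primary R I \<longleftrightarrow> ideal I R \<and> I \<noteq> carrier R \<and>
     (\<forall>a\<in>carrier R. \<forall>b\<in>carrier R. \<forall>c\<in>carrier R.
        a \<otimes>\<^bsub>R\<^esub> b \<otimes>\<^bsub>R\<^esub> c \<in> I \<longrightarrow>
          a \<otimes>\<^bsub>R\<^esub> b \<in> I \<or> a \<otimes>\<^bsub>R\<^esub> c \<in> ideal_radical R I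
          \<or> b \<otimes>\<^bsub>R\<^esub> c \<in> ideal_radical R I)"

definition module_colon :: "('a, 'c) ring_scheme \<Rightarrow> ('a, 'b, 'd) module_scheme \<Rightarrow> 'b set \<Rightarrow> 'a set" where
  "module_colon R M N = {r \<in> carrier R. \<forall>x\<in>carrier M. r \<odot>\<^bsub>M\<^esub> x \<in> N}"

definition pseudo_absorbing_primary :: "('a, 'c) ring_scheme \<Rightarrow> ('a, 'b, 'd) module_scheme \<Rightarrow> 'b set \<Rightarrow> bool" where
  "pseudo_absorbing_primary R M N \<longleftrightarrow> submodule N R M \<and> N \<noteq> carrier M \<and>
     two_absorbing_primary R (module_colon R M N)"

definition ideal_times_module :: "('a, 'c) ring_scheme \<Rightarrow> 'a set \<Rightarrow> ('a, 'b, 'd) module_scheme \<Rightarrow> 'b set" where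
  "ideal_times_module R I M =
     \<Inter>{N. submodule N R M \<and> {a \<odot>\<^bsub>M\<^esub> m | a m. a \<in> I \<and> m \<in> carrier M} \<subseteq> N}"

definition pap_multiplication_module :: "('a, 'c) ring_scheme \<Rightarrow> ('a, 'b, 'd) module_scheme \<Rightarrow> bool" where
  "pap_multiplication_module R M \<longleftrightarrow> module R M \<and>
     (\<forall>N. pseudo_absorbing_primary R M N \<longrightarrow> (\<exists>I. ideal I R \<and> N = ideal_times_module R I M))"

definition indecomposable_module :: "('a, 'c) ring_scheme \<Rightarrow> ('a, 'b, 'd) module_scheme \<Rightarrow> bool" where
  "indecomposable_module R M \<longleftrightarrow> carrier M \<noteq> {\<zero>\<^bsub>M\<^esub>} \<and>
     \<not> (\<exists>N K. submodule N R M \<and> submodule K R M \<and> N \<noteq> {\<zero>\<^bsub>M\<^esub>} \<and> K \<noteq> {\<zero>\<^bsub>M\<^esub>} \<and>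
            N \<inter> K = {\<zero>\<^bsub>M\<^esub>} \<and> N <+>\<^bsub>M\<^esub> K = carrier M)"

definition module_iso :: "('a, 'c) ring_scheme \<Rightarrow> ('a, 'b, 'd) module_scheme \<Rightarrow> ('a, 'e, 'f) module_scheme \<Rightarrow> bool" where
  "module_iso R M N \<longleftrightarrow> (\<exists>f. bij_betw f (carrier M) (carrier N) \<and>
     (\<forall>x\<in>carrier M. \<forall>y\<in>carrier M. f (x \<oplus>\<^bsub>M\<^esub> y) = f x \<oplus>\<^bsub>N\<^esub> f y) \<and>
     (\<forall>r\<in>carrier R. \<forall>x\<in>carrier M. f (r \<odot>\<^bsub>M\<^esub> x) = r \<odot>\<^bsub>N\<^esub> f x))"

definition self_module :: "('a, 'c) ring_scheme \<Rightarrow> ('a, 'a) module" where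
  "self_module R = \<lparr>carrier = carrier R, monoid.mult = monoid.mult R, monoid.one = \<one>\<^bsub>R\<^esub>,
     ring.zero = \<zero>\<^bsub>R\<^esub>, ring.add = ring.add R, smult = monoid.mult R\<rparr>"

definition quot_module :: "('a, 'c) ring_scheme \<Rightarrow> 'a set \<Rightarrow> ('a, 'a set) module" where
  "quot_module R I = \<lparr>carrier = carrier (R Quot I), monoid.mult = monoid.mult (R Quot I),
     monoid.one = \<one>\<^bsub>(R Quot I)\<^esub>, ring.zero = \<zero>\<^bsub>(R Quot I)\<^esub>, ring.add = ring.add (R Quot I),
     smult = (\<lambda>r C. monoid.mult (R Quot I) (a_r_coset R I r) C)\<rparr>"

end

theory Submission
  imports Defs
begin

(* Over a DVR R with maximal ideal P = Rp the nonzero ideals are the powers P^n. Hence every proper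
   ideal is 2-absorbing primary (P lies in the radical of P^n and elements outside P are units), every
   proper submodule is pseudo-absorbing primary, and the pap-multiplication modules are exactly the
   multiplication modules, whose submodules all have the form IM.

   A nonzero multiplication module M is cyclic: take m outside pM if pM is not M, and m nonzero
   otherwise (then p^n M = M for all n); in both cases writing Rm = IM forces Rm = M. Conversely,
   cyclic modules are multiplication modules, and as divisibility in R is total their submodules
   form a chain, so nonzero cyclic modules are indecomposable. Finally a cyclic module is R/ann M,
   and the proper ideals 0 and P^n (n >= 1) give the two families of the theorem. *)

lemma (in cring) idealI_by_closure:
  assumes "I \<subseteq> carrier R" "\<zero> \<in> I" "\<And>a b. a \<in> I \<Longrightarrow> b \<in> I \<Longrightarrow> a \<oplus> b \<in> I"
    and "\<And>a x. a \<in> I \<Longrightarrow> x \<in> carrier R \<Longrightarrow> x \<otimes> a \<in> I"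
  shows "ideal I R"
proof (rule idealI[OF ring_axioms])
  show "subgroup I (add_monoid R)"
  proof (rule add.subgroupI)
    fix a assume a: "a \<in> I"
    then have "\<ominus> \<one> \<otimes> a \<in> I" using assms(4) by simp
    then show "\<ominus> a \<in> I" using a assms(1) by (auto simp: l_minus)
  qed (use assms in auto)
next
  fix a x assume "a \<in> I" "x \<in> carrier R"
  then show "x \<otimes> a \<in> I" "a \<otimes> x \<in> I" using assms(1,4) m_comm by (auto simp: subset_iff)
qed

lemma (in ring) subset_ideal_radical: "I \<subseteq> carrier R \<Longrightarrow> I \<subseteq> ideal_radical R I"
  unfolding ideal_radical_def by (auto intro!: exI[of _ "1::nat"])

lemma (in cring) PIdl_subset_radical_PIdl_pow:
  assumes "a \<in> carrier R"
  shows "PIdl a \<subseteq> ideal_radical R (PIdl (a [^] (n::nat)))"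
proof
  fix w assume "w \<in> PIdl a"
  then obtain r where r: "r \<in> carrier R" "w = r \<otimes> a" unfolding cgenideal_def by blast
  then have "w [^] n = r [^] n \<otimes> a [^] n"
    using assms pow_mult_distrib[OF m_comm] by simp
  then have "w [^] n \<in> PIdl (a [^] n)" using r(1) unfolding cgenideal_def by auto
  then show "w \<in> ideal_radical R (PIdl (a [^] n))"
    using r assms unfolding ideal_radical_def by auto
qed

lemma (in cring) cgenideal_zero: "PIdl \<zero> = {\<zero>}"
  using cgenideal_eq_genideal[OF zero_closed] genideal_zero by simp

lemma (in monoid) foldr_replicate_eq_nat_pow:
  "a \<in> carrier G \<Longrightarrow> foldr (\<otimes>) (replicate n a) \<one> = a [^] (n::nat)"
  by (induction n) (simp_all add: nat_pow_Suc2[symmetric] del: foldr_replicate)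

section \<open>Products of ideals and modules, colon ideals\<close>

lemma (in module) zero_submodule: "submodule {\<zero>\<^bsub>M\<^esub>} R M"
  by (rule submoduleI) auto

lemma (in module) submodule_smult_image:
  assumes a: "a \<in> carrier R"
  shows "submodule ((\<lambda>x. a \<odot>\<^bsub>M\<^esub> x) ` carrier M) R M"
proof (rule submoduleI)
  show "\<zero>\<^bsub>M\<^esub> \<in> (\<lambda>x. a \<odot>\<^bsub>M\<^esub> x) ` carrier M"
    using a by (intro image_eqI[of _ _ "\<zero>\<^bsub>M\<^esub>"]) simp_all
  fix y z assume "y \<in> (\<lambda>x. a \<odot>\<^bsub>M\<^esub> x) ` carrier M" "z \<in> (\<lambda>x. a \<odot>\<^bsub>M\<^esub> x) ` carrier M"
  then obtain x w where xw: "x \<in> carrier M" "w \<in> carrier M" "y = a \<odot>\<^bsub>M\<^esub> x" "z = a \<odot>\<^bsub>M\<^esub> w"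
    by auto
  show "\<ominus>\<^bsub>M\<^esub> y \<in> (\<lambda>x. a \<odot>\<^bsub>M\<^esub> x) ` carrier M"
    using xw a by (intro image_eqI[of _ _ "\<ominus>\<^bsub>M\<^esub> x"]) (simp_all add: smult_r_minus)
  show "y \<oplus>\<^bsub>M\<^esub> z \<in> (\<lambda>x. a \<odot>\<^bsub>M\<^esub> x) ` carrier M"
    using xw a by (intro image_eqI[of _ _ "x \<oplus>\<^bsub>M\<^esub> w"]) (simp_all add: smult_r_distr)
  fix r assume "r \<in> carrier R"
  then show "r \<odot>\<^bsub>M\<^esub> y \<in> (\<lambda>x. a \<odot>\<^bsub>M\<^esub> x) ` carrier M"
    using xw a by (intro image_eqI[of _ _ "r \<odot>\<^bsub>M\<^esub> x"]) (simp_all add: smult_assoc1[symmetric] m_comm)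
qed (use a in auto)

lemma (in module) smult_eq_iff_diff:
  assumes "r \<in> carrier R" "s \<in> carrier R" "m \<in> carrier M"
  shows "r \<odot>\<^bsub>M\<^esub> m = s \<odot>\<^bsub>M\<^esub> m \<longleftrightarrow> (r \<ominus> s) \<odot>\<^bsub>M\<^esub> m = \<zero>\<^bsub>M\<^esub>"
proof -
  have "(r \<ominus> s) \<odot>\<^bsub>M\<^esub> m = r \<odot>\<^bsub>M\<^esub> m \<oplus>\<^bsub>M\<^esub> \<ominus>\<^bsub>M\<^esub> (s \<odot>\<^bsub>M\<^esub> m)"
    using assms by (simp add: a_minus_def smult_l_distr smult_l_minus)
  then show ?thesis
    using assms by (metis M.add.inv_closed M.minus_equality M.minus_minus M.r_neg smult_closed)
qed

lemma ideal_times_module_mem: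
  "a \<in> I \<Longrightarrow> x \<in> carrier M \<Longrightarrow> a \<odot>\<^bsub>M\<^esub> x \<in> ideal_times_module R I M"
  unfolding ideal_times_module_def by blast

lemma ideal_times_module_least:
  "submodule N R M \<Longrightarrow> (\<And>a x. a \<in> I \<Longrightarrow> x \<in> carrier M \<Longrightarrow> a \<odot>\<^bsub>M\<^esub> x \<in> N)
    \<Longrightarrow> ideal_times_module R I M \<subseteq> N"
  unfolding ideal_times_module_def by blast

lemma ideal_times_module_mono:
  "I \<subseteq> J \<Longrightarrow> ideal_times_module R I M \<subseteq> ideal_times_module R J M"
  unfolding ideal_times_module_def by blast

lemma (in module) ideal_times_module_carrier: "ideal_times_module R (carrier R) M = carrier M"
proof
  show "ideal_times_module R (carrier R) M \<subseteq> carrier M"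
    by (rule ideal_times_module_least[OF carrier_is_submodule]) simp
  show "carrier M \<subseteq> ideal_times_module R (carrier R) M"
  proof
    fix x assume "x \<in> carrier M"
    then have "\<one> \<odot>\<^bsub>M\<^esub> x \<in> ideal_times_module R (carrier R) M"
      by (intro ideal_times_module_mem) simp_all
    then show "x \<in> ideal_times_module R (carrier R) M" using \<open>x \<in> carrier M\<close> by simp
  qed
qed

lemma (in module) ideal_times_module_subset_carrier:
  "I \<subseteq> carrier R \<Longrightarrow> ideal_times_module R I M \<subseteq> carrier M"
  using ideal_times_module_mono[of I "carrier R" R M] ideal_times_module_carrier by simp

lemma (in module) ideal_times_module_PIdl:
  assumes a: "a \<in> carrier R"
  shows "ideal_times_module R (PIdl a) M = (\<lambda>x. a \<odot>\<^bsub>M\<^esub> x) ` carrier M"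
proof
  show "ideal_times_module R (PIdl a) M \<subseteq> (\<lambda>x. a \<odot>\<^bsub>M\<^esub> x) ` carrier M"
  proof (rule ideal_times_module_least[OF submodule_smult_image[OF a]])
    fix b x assume "b \<in> PIdl a" "x \<in> carrier M"
    then obtain r where "r \<in> carrier R" "b = r \<otimes> a" "x \<in> carrier M"
      unfolding cgenideal_def by auto
    then show "b \<odot>\<^bsub>M\<^esub> x \<in> (\<lambda>x. a \<odot>\<^bsub>M\<^esub> x) ` carrier M"
      using a by (intro image_eqI[of _ _ "r \<odot>\<^bsub>M\<^esub> x"]) (simp_all add: smult_assoc1[symmetric] m_comm)
  qed
  show "(\<lambda>x. a \<odot>\<^bsub>M\<^esub> x) ` carrier M \<subseteq> ideal_times_module R (PIdl a) M"
    using ideal_times_module_mem[OF cgenideal_self[OF a]] by auto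
qed

lemma (in module) smult_image_pow_eq_carrier:
  assumes a: "a \<in> carrier R" and onto: "(\<lambda>x. a \<odot>\<^bsub>M\<^esub> x) ` carrier M = carrier M"
  shows "(\<lambda>x. (a [^] (n::nat)) \<odot>\<^bsub>M\<^esub> x) ` carrier M = carrier M"
proof (induction n)
  case 0
  have "(\<lambda>x. \<one> \<odot>\<^bsub>M\<^esub> x) ` carrier M = (\<lambda>x. x) ` carrier M"
    by (rule image_cong) simp_all
  then show ?case by simp
next
  case (Suc n)
  have "(\<lambda>x. (a [^] Suc n) \<odot>\<^bsub>M\<^esub> x) ` carrier M = (\<lambda>x. (a [^] n) \<odot>\<^bsub>M\<^esub> x) ` (\<lambda>x. a \<odot>\<^bsub>M\<^esub> x) ` carrier M"
    unfolding image_image using a by (intro image_cong) (simp_all add: smult_assoc1)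
  then show ?case using Suc onto by simp
qed

lemma (in module) ideal_module_colon:
  assumes "submodule N R M"
  shows "ideal (module_colon R M N) R"
proof (rule idealI_by_closure)
  note N = submoduleE[OF assms]
  obtain b where "b \<in> N" using N(2) by blast
  then have "\<zero> \<odot>\<^bsub>M\<^esub> b \<in> N" "b \<in> carrier M" using N(1,4) by auto
  then show "\<zero> \<in> module_colon R M N" unfolding module_colon_def by simp
  fix a c assume "a \<in> module_colon R M N"
  then show "c \<in> module_colon R M N \<Longrightarrow> a \<oplus> c \<in> module_colon R M N"
    and "c \<in> carrier R \<Longrightarrow> c \<otimes> a \<in> module_colon R M N"
    using N(4,5) unfolding module_colon_def by (simp_all add: smult_l_distr smult_assoc1)
qed (auto simp: module_colon_def)

lemma (in module) module_colon_eq_carrier_iff: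
  assumes "submodule N R M"
  shows "module_colon R M N = carrier R \<longleftrightarrow> N = carrier M"
proof
  assume "module_colon R M N = carrier R"
  then have "\<one> \<odot>\<^bsub>M\<^esub> x \<in> N" if "x \<in> carrier M" for x
    using that unfolding module_colon_def by blast
  then show "N = carrier M" using submoduleE(1)[OF assms] by auto
qed (auto simp: module_colon_def)

section \<open>Cyclic modules\<close>

definition cyclic_generator :: "('a, 'c) ring_scheme \<Rightarrow> ('a, 'b, 'd) module_scheme \<Rightarrow> 'b \<Rightarrow> bool"
  where "cyclic_generator R M m \<longleftrightarrow>
    m \<in> carrier M \<and> (\<forall>x\<in>carrier M. \<exists>r\<in>carrier R. x = r \<odot>\<^bsub>M\<^esub> m)"

lemma cyclic_generator_closed: "cyclic_generator R M m \<Longrightarrow> m \<in> carrier M"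
  unfolding cyclic_generator_def by blast

lemma cyclic_generatorD:
  "cyclic_generator R M m \<Longrightarrow> x \<in> carrier M \<Longrightarrow> \<exists>r\<in>carrier R. x = r \<odot>\<^bsub>M\<^esub> m"
  unfolding cyclic_generator_def by blast

lemma (in module) submodule_cyclic:
  assumes m: "m \<in> carrier M"
  shows "submodule ((\<lambda>r. r \<odot>\<^bsub>M\<^esub> m) ` carrier R) R M"
proof (rule submoduleI)
  show "\<zero>\<^bsub>M\<^esub> \<in> (\<lambda>r. r \<odot>\<^bsub>M\<^esub> m) ` carrier R"
    using m by (intro image_eqI[of _ _ \<zero>]) simp_all
  fix x y assume "x \<in> (\<lambda>r. r \<odot>\<^bsub>M\<^esub> m) ` carrier R" "y \<in> (\<lambda>r. r \<odot>\<^bsub>M\<^esub> m) ` carrier R"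
  then obtain r s where rs: "r \<in> carrier R" "s \<in> carrier R" "x = r \<odot>\<^bsub>M\<^esub> m" "y = s \<odot>\<^bsub>M\<^esub> m"
    by auto
  show "\<ominus>\<^bsub>M\<^esub> x \<in> (\<lambda>r. r \<odot>\<^bsub>M\<^esub> m) ` carrier R"
    using rs m by (intro image_eqI[of _ _ "\<ominus> r"]) (simp_all add: smult_l_minus)
  show "x \<oplus>\<^bsub>M\<^esub> y \<in> (\<lambda>r. r \<odot>\<^bsub>M\<^esub> m) ` carrier R"
    using rs m by (intro image_eqI[of _ _ "r \<oplus> s"]) (simp_all add: smult_l_distr)
  fix t assume "t \<in> carrier R"
  then show "t \<odot>\<^bsub>M\<^esub> x \<in> (\<lambda>r. r \<odot>\<^bsub>M\<^esub> m) ` carrier R"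
    using rs m by (intro image_eqI[of _ _ "t \<otimes> r"]) (simp_all add: smult_assoc1)
qed (use m in auto)

lemma (in module) module_colon_cyclic:
  assumes m: "cyclic_generator R M m" and N: "submodule N R M"
  shows "module_colon R M N = {r \<in> carrier R. r \<odot>\<^bsub>M\<^esub> m \<in> N}"
proof -
  have "r \<odot>\<^bsub>M\<^esub> x \<in> N" if r: "r \<in> carrier R" "r \<odot>\<^bsub>M\<^esub> m \<in> N" and x: "x \<in> carrier M" for r x
  proof -
    obtain s where "s \<in> carrier R" "x = s \<odot>\<^bsub>M\<^esub> m"
      using cyclic_generatorD[OF m x] by blast
    then have "r \<odot>\<^bsub>M\<^esub> x = s \<odot>\<^bsub>M\<^esub> (r \<odot>\<^bsub>M\<^esub> m)"
      using r cyclic_generator_closed[OF m] by (simp add: smult_assoc1[symmetric] m_comm)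
    then show ?thesis using submoduleE(4)[OF N] \<open>s \<in> carrier R\<close> r by simp
  qed
  then show ?thesis using cyclic_generator_closed[OF m] unfolding module_colon_def by blast
qed

definition multiplication_module :: "('a, 'c) ring_scheme \<Rightarrow> ('a, 'b, 'd) module_scheme \<Rightarrow> bool"
  where "multiplication_module R M \<longleftrightarrow> module R M \<and>
    (\<forall>N. submodule N R M \<longrightarrow> (\<exists>I. ideal I R \<and> N = ideal_times_module R I M))"

lemma (in module) multiplication_moduleI:
  assumes "\<And>N. submodule N R M \<Longrightarrow> N \<noteq> carrier M \<Longrightarrow> \<exists>I. ideal I R \<and> N = ideal_times_module R I M"
  shows "multiplication_module R M"
proof -
  have "\<exists>I. ideal I R \<and> N = ideal_times_module R I M" if "submodule N R M" for N
  proof (cases "N = carrier M")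
    case True
    then show ?thesis using ideal_times_module_carrier oneideal by auto
  qed (use assms that in blast)
  then show ?thesis unfolding multiplication_module_def using module_axioms by blast
qed

lemma (in module) cyclic_multiplication_module:
  assumes m: "cyclic_generator R M m"
  shows "multiplication_module R M"
  unfolding multiplication_module_def
proof (intro conjI allI impI exI)
  fix N assume N: "submodule N R M"
  show "ideal (module_colon R M N) R" using ideal_module_colon[OF N] .
  show "N = ideal_times_module R (module_colon R M N) M"
  proof
    show "N \<subseteq> ideal_times_module R (module_colon R M N) M"
    proof
      fix y assume "y \<in> N"
      moreover obtain r where "r \<in> carrier R" "y = r \<odot>\<^bsub>M\<^esub> m"
        using cyclic_generatorD[OF m] submoduleE(1)[OF N] \<open>y \<in> N\<close> by blast
      ultimately have "r \<in> module_colon R M N" "y = r \<odot>\<^bsub>M\<^esub> m"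
        using module_colon_cyclic[OF m N] by auto
      then show "y \<in> ideal_times_module R (module_colon R M N) M"
        using ideal_times_module_mem cyclic_generator_closed[OF m] by simp
    qed
    show "ideal_times_module R (module_colon R M N) M \<subseteq> N"
      by (rule ideal_times_module_least[OF N]) (simp add: module_colon_def)
  qed
qed (rule module_axioms)

lemma (in module) multiplication_module_cyclic_generatorI:
  assumes mult: "multiplication_module R M" and m: "m \<in> carrier M"
    and full: "\<And>I. ideal I R \<Longrightarrow> m \<in> ideal_times_module R I M \<Longrightarrow> ideal_times_module R I M = carrier M"
  shows "cyclic_generator R M m"
proof -
  obtain I where I: "ideal I R" "(\<lambda>r. r \<odot>\<^bsub>M\<^esub> m) ` carrier R = ideal_times_module R I M"
    using mult submodule_cyclic[OF m] unfolding multiplication_module_def by blast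
  have "m \<in> (\<lambda>r. r \<odot>\<^bsub>M\<^esub> m) ` carrier R" using m by (intro image_eqI[of _ _ \<one>]) simp_all
  then have "(\<lambda>r. r \<odot>\<^bsub>M\<^esub> m) ` carrier R = carrier M" using full I by simp
  then show ?thesis unfolding cyclic_generator_def using m by auto
qed

lemma (in module) cyclic_submodules_linear:
  assumes total: "\<forall>a\<in>carrier R. \<forall>b\<in>carrier R. a divides b \<or> b divides a"
    and m: "cyclic_generator R M m" and N: "submodule N R M" and K: "submodule K R M"
  shows "N \<subseteq> K \<or> K \<subseteq> N"
proof (rule ccontr)
  have absorb: "b \<odot>\<^bsub>M\<^esub> m \<in> L"
    if L: "submodule L R M" and "a \<odot>\<^bsub>M\<^esub> m \<in> L" "a divides b" "a \<in> carrier R" for L a b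
  proof -
    obtain c where "c \<in> carrier R" "b = a \<otimes> c" using \<open>a divides b\<close> unfolding factor_def by blast
    then have "b \<odot>\<^bsub>M\<^esub> m = c \<odot>\<^bsub>M\<^esub> (a \<odot>\<^bsub>M\<^esub> m)"
      using cyclic_generator_closed[OF m] \<open>a \<in> carrier R\<close> by (simp add: smult_assoc1[symmetric] m_comm)
    then show ?thesis using submoduleE(4)[OF L \<open>c \<in> carrier R\<close>] that(2) by simp
  qed
  assume "\<not> (N \<subseteq> K \<or> K \<subseteq> N)"
  then obtain x y where x: "x \<in> N" "x \<notin> K" and y: "y \<in> K" "y \<notin> N" by blast
  obtain a where a: "a \<in> carrier R" "x = a \<odot>\<^bsub>M\<^esub> m"
    using cyclic_generatorD[OF m] x(1) submoduleE(1)[OF N] by blast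
  obtain b where b: "b \<in> carrier R" "y = b \<odot>\<^bsub>M\<^esub> m"
    using cyclic_generatorD[OF m] y(1) submoduleE(1)[OF K] by blast
  have "a divides b \<or> b divides a" using total a(1) b(1) by blast
  then show False using absorb[OF N _ _ a(1)] absorb[OF K _ _ b(1)] x y a(2) b(2) by blast
qed

lemma (in module) cyclic_indecomposable:
  assumes "\<forall>a\<in>carrier R. \<forall>b\<in>carrier R. a divides b \<or> b divides a"
    and "cyclic_generator R M m" and "carrier M \<noteq> {\<zero>\<^bsub>M\<^esub>}"
  shows "indecomposable_module R M"
proof -
  have "N = {\<zero>\<^bsub>M\<^esub>} \<or> K = {\<zero>\<^bsub>M\<^esub>}"
    if "submodule N R M" "submodule K R M" "N \<inter> K = {\<zero>\<^bsub>M\<^esub>}" for N K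
    using cyclic_submodules_linear[OF assms(1,2) that(1,2)] that(3)
    by (elim disjE) (simp_all add: Int_absorb1 Int_absorb2)
  then show ?thesis unfolding indecomposable_module_def using assms(3) by blast
qed

text \<open>An abstract presentation of \<open>Q\<close> as \<open>R / I\<close>; it covers both \<open>self_module R\<close>
  (\<open>h\<close> the identity, \<open>I = {\<zero>}\<close>) and \<open>quot_module R I\<close> (\<open>h\<close> the coset map).\<close>

definition linear_quotient_map ::
    "('a, 'c) ring_scheme \<Rightarrow> ('a, 'e, 'f) module_scheme \<Rightarrow> ('a \<Rightarrow> 'e) \<Rightarrow> 'a set \<Rightarrow> bool"
  where "linear_quotient_map R Q h I \<longleftrightarrow> carrier Q = h ` carrier R \<and>
    (\<forall>r\<in>carrier R. \<forall>s\<in>carrier R. h (r \<oplus>\<^bsub>R\<^esub> s) = h r \<oplus>\<^bsub>Q\<^esub> h s) \<and>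
    (\<forall>t\<in>carrier R. \<forall>r\<in>carrier R. t \<odot>\<^bsub>Q\<^esub> h r = h (t \<otimes>\<^bsub>R\<^esub> r)) \<and>
    (\<forall>r\<in>carrier R. \<forall>s\<in>carrier R. h r = h s \<longleftrightarrow> r \<ominus>\<^bsub>R\<^esub> s \<in> I)"

lemma linear_quotient_mapD:
  assumes "linear_quotient_map R Q h I"
  shows "carrier Q = h ` carrier R"
    and "\<And>r s. r \<in> carrier R \<Longrightarrow> s \<in> carrier R \<Longrightarrow> h (r \<oplus>\<^bsub>R\<^esub> s) = h r \<oplus>\<^bsub>Q\<^esub> h s"
    and "\<And>t r. t \<in> carrier R \<Longrightarrow> r \<in> carrier R \<Longrightarrow> t \<odot>\<^bsub>Q\<^esub> h r = h (t \<otimes>\<^bsub>R\<^esub> r)"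
    and "\<And>r s. r \<in> carrier R \<Longrightarrow> s \<in> carrier R \<Longrightarrow> h r = h s \<longleftrightarrow> r \<ominus>\<^bsub>R\<^esub> s \<in> I"
  using assms unfolding linear_quotient_map_def by auto

lemma (in cring) linear_quotient_map_self_module:
  "linear_quotient_map R (self_module R) (\<lambda>r. r) {\<zero>}"
  unfolding linear_quotient_map_def by (simp add: self_module_def)

lemma (in ring) linear_quotient_map_quot_module:
  assumes "ideal I R"
  shows "linear_quotient_map R (quot_module R I) (a_r_coset R I) I"
  unfolding linear_quotient_map_def
  using ring_hom_add[OF ideal.rcos_ring_hom[OF assms]] ring_hom_mult[OF ideal.rcos_ring_hom[OF assms]]
    quotient_eq_iff_same_a_r_cos[OF assms]
  by (auto simp: quot_module_def FactRing_def A_RCOSETS_def')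

lemma ex_factor_through:
  assumes "\<And>r s. r \<in> A \<Longrightarrow> s \<in> A \<Longrightarrow> g r = g s \<Longrightarrow> h r = h s"
  shows "\<exists>f. \<forall>r\<in>A. f (g r) = h r"
proof (intro exI[of _ "h \<circ> inv_into A g"] ballI)
  fix r assume r: "r \<in> A"
  then have "g (inv_into A g (g r)) = g r" "inv_into A g (g r) \<in> A"
    by (simp_all add: f_inv_into_f inv_into_into)
  then show "(h \<circ> inv_into A g) (g r) = h r" using assms[of "inv_into A g (g r)" r] r by simp
qed

lemma (in module) smult_generator_eq_iff:
  assumes h: "linear_quotient_map R Q h I" and m: "cyclic_generator R M m"
    and ann: "module_colon R M {\<zero>\<^bsub>M\<^esub>} = I" and rs: "r \<in> carrier R" "s \<in> carrier R"
  shows "r \<odot>\<^bsub>M\<^esub> m = s \<odot>\<^bsub>M\<^esub> m \<longleftrightarrow> h r = h s"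
proof -
  have "r \<odot>\<^bsub>M\<^esub> m = s \<odot>\<^bsub>M\<^esub> m \<longleftrightarrow> (r \<ominus> s) \<odot>\<^bsub>M\<^esub> m = \<zero>\<^bsub>M\<^esub>"
    using smult_eq_iff_diff[OF rs cyclic_generator_closed[OF m]] .
  also have "\<dots> \<longleftrightarrow> r \<ominus> s \<in> I"
    using module_colon_cyclic[OF m zero_submodule] ann rs by auto
  also have "\<dots> \<longleftrightarrow> h r = h s"
    using linear_quotient_mapD(4)[OF h rs] by simp
  finally show ?thesis .
qed

lemma (in module) module_iso_if_cyclic:
  assumes h: "linear_quotient_map R Q h I"
    and m: "cyclic_generator R M m" and ann: "module_colon R M {\<zero>\<^bsub>M\<^esub>} = I"
  shows "module_iso R M Q"
proof -
  note m_closed = cyclic_generator_closed[OF m] and gen = cyclic_generatorD[OF m]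
  note eq_iff = smult_generator_eq_iff[OF h m ann]
  obtain f where f: "\<And>r. r \<in> carrier R \<Longrightarrow> f (r \<odot>\<^bsub>M\<^esub> m) = h r"
    using ex_factor_through[of "carrier R" "\<lambda>r. r \<odot>\<^bsub>M\<^esub> m" h] eq_iff by blast
  have "inj_on f (carrier M)"
  proof (rule inj_onI)
    fix x y assume "x \<in> carrier M" "y \<in> carrier M" "f x = f y"
    moreover obtain r s where "r \<in> carrier R" "x = r \<odot>\<^bsub>M\<^esub> m" "s \<in> carrier R" "y = s \<odot>\<^bsub>M\<^esub> m"
      using gen[OF calculation(1)] gen[OF calculation(2)] by blast
    ultimately show "x = y" using f eq_iff by simp
  qed
  moreover have "f ` carrier M = carrier Q"
  proof
    show "f ` carrier M \<subseteq> carrier Q"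
    proof
      fix z assume "z \<in> f ` carrier M"
      then obtain x where "x \<in> carrier M" "z = f x" by blast
      then obtain r where "r \<in> carrier R" "z = f (r \<odot>\<^bsub>M\<^esub> m)" using gen by blast
      then show "z \<in> carrier Q" using f linear_quotient_mapD(1)[OF h] by simp
    qed
    show "carrier Q \<subseteq> f ` carrier M"
    proof
      fix z assume "z \<in> carrier Q"
      then obtain r where "r \<in> carrier R" "z = h r" using linear_quotient_mapD(1)[OF h] by blast
      then show "z \<in> f ` carrier M" using f m_closed by (intro image_eqI[of _ _ "r \<odot>\<^bsub>M\<^esub> m"]) simp_all
    qed
  qed
  moreover have "f (x \<oplus>\<^bsub>M\<^esub> y) = f x \<oplus>\<^bsub>Q\<^esub> f y" if xy: "x \<in> carrier M" "y \<in> carrier M" for x y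
  proof -
    obtain r s where "r \<in> carrier R" "x = r \<odot>\<^bsub>M\<^esub> m" "s \<in> carrier R" "y = s \<odot>\<^bsub>M\<^esub> m"
      using gen[OF xy(1)] gen[OF xy(2)] by blast
    moreover from calculation have "x \<oplus>\<^bsub>M\<^esub> y = (r \<oplus> s) \<odot>\<^bsub>M\<^esub> m"
      using m_closed by (simp add: smult_l_distr)
    ultimately show ?thesis using f linear_quotient_mapD(2)[OF h] by simp
  qed
  moreover have "f (t \<odot>\<^bsub>M\<^esub> x) = t \<odot>\<^bsub>Q\<^esub> f x" if tx: "t \<in> carrier R" "x \<in> carrier M" for t x
  proof -
    obtain r where "r \<in> carrier R" "x = r \<odot>\<^bsub>M\<^esub> m" using gen[OF tx(2)] by blast
    moreover from calculation have "t \<odot>\<^bsub>M\<^esub> x = (t \<otimes> r) \<odot>\<^bsub>M\<^esub> m"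
      using m_closed tx by (simp add: smult_assoc1)
    ultimately show ?thesis using f linear_quotient_mapD(3)[OF h] tx by simp
  qed
  ultimately show ?thesis unfolding module_iso_def bij_betw_def by (intro exI[of _ f]) simp
qed

lemma (in module) cyclic_if_module_iso:
  assumes h: "linear_quotient_map R Q h I" and I: "ideal I R" and iso: "module_iso R M Q"
  shows "\<exists>m. cyclic_generator R M m \<and> module_colon R M {\<zero>\<^bsub>M\<^esub>} = I"
proof -
  obtain f where inj: "inj_on f (carrier M)" and onto: "f ` carrier M = carrier Q"
    and f_smult: "\<And>r x. r \<in> carrier R \<Longrightarrow> x \<in> carrier M \<Longrightarrow> f (r \<odot>\<^bsub>M\<^esub> x) = r \<odot>\<^bsub>Q\<^esub> f x"
    using iso unfolding module_iso_def bij_betw_def by blast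
  have "h \<one> \<in> f ` carrier M" using onto linear_quotient_mapD(1)[OF h] by simp
  then obtain m where m: "m \<in> carrier M" "f m = h \<one>" by auto
  have fm: "f (r \<odot>\<^bsub>M\<^esub> m) = h r" if r: "r \<in> carrier R" for r
    using f_smult[OF r m(1)] m(2) linear_quotient_mapD(3)[OF h r] r by simp
  have gen: "cyclic_generator R M m"
    unfolding cyclic_generator_def
  proof (intro conjI ballI)
    fix x assume x: "x \<in> carrier M"
    then have "f x \<in> h ` carrier R" using onto linear_quotient_mapD(1)[OF h] by auto
    then obtain r where r: "r \<in> carrier R" "f x = f (r \<odot>\<^bsub>M\<^esub> m)" using fm by auto
    then have "x = r \<odot>\<^bsub>M\<^esub> m" using inj_onD[OF inj r(2) x] m(1) by simp
    with r(1) show "\<exists>r\<in>carrier R. x = r \<odot>\<^bsub>M\<^esub> m" by blast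
  qed (rule m(1))
  have "r \<odot>\<^bsub>M\<^esub> m = \<zero>\<^bsub>M\<^esub> \<longleftrightarrow> r \<in> I" if r: "r \<in> carrier R" for r
  proof -
    have "r \<odot>\<^bsub>M\<^esub> m = \<zero>\<^bsub>M\<^esub> \<longleftrightarrow> f (r \<odot>\<^bsub>M\<^esub> m) = f (\<zero> \<odot>\<^bsub>M\<^esub> m)"
      using inj_on_eq_iff[OF inj] r m(1) by simp
    also have "\<dots> \<longleftrightarrow> r \<ominus> \<zero> \<in> I"
      using fm r linear_quotient_mapD(4)[OF h r] by simp
    finally show ?thesis using r by (simp add: a_minus_def)
  qed
  then have "module_colon R M {\<zero>\<^bsub>M\<^esub>} = I"
    using module_colon_cyclic[OF gen zero_submodule] ideal.Icarr[OF I] by auto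
  with gen show ?thesis by blast
qed

lemma (in module) module_iso_iff_cyclic:
  assumes "linear_quotient_map R Q h I" and "ideal I R"
  shows "module_iso R M Q \<longleftrightarrow> (\<exists>m. cyclic_generator R M m) \<and> module_colon R M {\<zero>\<^bsub>M\<^esub>} = I"
  using module_iso_if_cyclic[OF assms(1)] cyclic_if_module_iso[OF assms] by blast

section \<open>Discrete valuation rings\<close>

locale dvr = principal_domain R for R (structure) + fixes p
  assumes p_closed: "p \<in> carrier R" and maximalideal_PIdl_p: "maximalideal (PIdl p) R"
    and unique_nonzero_primeideal: "\<exists>!P. primeideal P R \<and> P \<noteq> {\<zero>}"

lemma DVR_imp_dvr:
  "DVR R \<Longrightarrow> p \<in> carrier R \<Longrightarrow> maximalideal (PIdl\<^bsub>R\<^esub> p) R \<Longrightarrow> dvr R p"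
  unfolding DVR_def dvr_def dvr_axioms_def by blast

context dvr
begin

lemma p_nonzero: "p \<noteq> \<zero>"
proof
  assume "p = \<zero>"
  obtain P where P: "primeideal P R" "P \<noteq> {\<zero>}"
    using unique_nonzero_primeideal by blast
  have "ideal P R" using P(1) by (rule primeideal.axioms(1))
  then have "{\<zero>} \<subseteq> P" "P \<subseteq> carrier R"
    using additive_subgroup.zero_closed[OF ideal.axioms(1)] ideal.Icarr by auto
  then have "P = {\<zero>} \<or> P = carrier R"
    using maximalideal.I_maximal[OF maximalideal_PIdl_p \<open>ideal P R\<close>] \<open>p = \<zero>\<close> cgenideal_zero by simp
  then show False using P primeideal.I_notcarr by blast
qed

lemma nonzero_primeideal_eq_PIdl_p:
  assumes "primeideal P R" "P \<noteq> {\<zero>}"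
  shows "P = PIdl p"
proof -
  have "primeideal (PIdl p) R" "PIdl p \<noteq> {\<zero>}"
    using maximalideal_prime[OF maximalideal_PIdl_p] cgenideal_self[OF p_closed] p_nonzero by auto
  moreover obtain P0 where "\<And>Y. primeideal Y R \<and> Y \<noteq> {\<zero>} \<Longrightarrow> Y = P0"
    using unique_nonzero_primeideal by (elim ex1E) blast
  ultimately show ?thesis using assms by blast
qed

lemma ring_irreducible_associated_p:
  assumes "a \<in> carrier R" "ring_irreducible a"
  shows "a \<sim> p"
proof -
  have "primeideal (PIdl a) R"
    using maximalideal_prime[OF irreducible_imp_maximalideal[OF assms]] .
  moreover have "PIdl a \<noteq> {\<zero>}"
    using cgenideal_self[OF assms(1)] ring_irreducibleE(1)[OF assms] by blast
  ultimately show ?thesis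
    using nonzero_primeideal_eq_PIdl_p associated_iff_same_ideal[OF assms(1) p_closed] by simp
qed

lemma associated_pow_p:
  assumes a: "a \<in> carrier R" "a \<noteq> \<zero>"
  shows "\<exists>n::nat. a \<sim> p [^] n"
proof (cases "a \<in> Units R")
  case True
  then have "a \<sim> p [^] (0::nat)" using Units_assoc[of a \<one>] by simp
  then show ?thesis by blast
next
  case False
  obtain fs where fs: "set fs \<subseteq> carrier (mult_of R)" "wfactors (mult_of R) fs a"
    using factorization_property a False by blast
  have "f \<sim>\<^bsub>mult_of R\<^esub> p" if "f \<in> set fs" for f
  proof -
    have "f \<in> carrier R - {\<zero>}" "irreducible (mult_of R) f"
      using fs that unfolding wfactors_def by auto
    then have "f \<sim> p"
      using ring_irreducible_associated_p[OF _ ring_irreducibleI'] by blast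
    then show ?thesis
      using assoc_iff_assoc_mult[OF _ p_closed] \<open>f \<in> carrier R - {\<zero>}\<close> by blast
  qed
  then have "fs [\<sim>]\<^bsub>mult_of R\<^esub> replicate (length fs) p"
    by (induction fs) auto
  moreover have "set (replicate (length fs) p) \<subseteq> carrier (mult_of R)"
    using p_closed p_nonzero by auto
  ultimately have "foldr (\<otimes>) fs \<one> \<sim>\<^bsub>mult_of R\<^esub> foldr (\<otimes>) (replicate (length fs) p) \<one>"
    using mult_of.multlist_listassoc_cong fs(1) by (simp del: foldr_replicate)
  moreover have prod_closed: "foldr (\<otimes>) fs \<one> \<in> carrier R"
    using fs(1) by (intro multlist_closed) auto
  ultimately have "foldr (\<otimes>) fs \<one> \<sim> p [^] length fs"
    using assoc_iff_assoc_mult[OF prod_closed nat_pow_closed[OF p_closed]]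
    by (simp add: foldr_replicate_eq_nat_pow[OF p_closed] del: foldr_replicate)
  moreover have "a \<sim> foldr (\<otimes>) fs \<one>"
    using fs(2) assoc_iff_assoc_mult[OF prod_closed a(1)] unfolding wfactors_def
    by (simp add: associated_sym)
  ultimately have "a \<sim> p [^] length fs"
    using associated_trans a(1) nat_pow_closed[OF p_closed] by blast
  then show ?thesis by blast
qed

lemma ideal_eq_zero_or_PIdl_pow:
  assumes "ideal I R"
  shows "I = {\<zero>} \<or> (\<exists>n::nat. I = PIdl (p [^] n))"
proof -
  obtain a where a: "a \<in> carrier R" "I = PIdl a" using exists_gen[OF assms] by blast
  show ?thesis
  proof (cases "a = \<zero>")
    case False
    then obtain n :: nat where "a \<sim> p [^] n" using associated_pow_p a(1) by blast
    then have "I = PIdl (p [^] n)"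
      using associated_iff_same_ideal[OF a(1) nat_pow_closed[OF p_closed]] a(2) by simp
    then show ?thesis by blast
  qed (simp add: a(2) cgenideal_zero)
qed

lemma PIdl_pow_antimono:
  assumes "i \<le> j"
  shows "PIdl (p [^] (j::nat)) \<subseteq> PIdl (p [^] i)"
proof -
  have "p [^] j = p [^] i \<otimes> p [^] (j - i)"
    using nat_pow_mult[OF p_closed, of i "j - i"] assms by simp
  then have "p [^] i divides p [^] j" using p_closed by (intro dividesI[of "p [^] (j - i)"]) simp_all
  then show ?thesis using to_contain_is_to_divide p_closed by simp
qed

lemma proper_ideal_iff:
  "ideal I R \<and> I \<noteq> carrier R \<longleftrightarrow> I = {\<zero>} \<or> (\<exists>n::nat. n \<ge> 1 \<and> I = PIdl (p [^] n))"
proof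
  assume I: "ideal I R \<and> I \<noteq> carrier R"
  have "PIdl (p [^] (0::nat)) = carrier R"
    using ideal_eq_carrier_iff[OF one_closed] by simp
  with I have "I \<noteq> PIdl (p [^] (0::nat))" by simp
  have "I = {\<zero>} \<or> (\<exists>n::nat. I = PIdl (p [^] n))" using ideal_eq_zero_or_PIdl_pow I by blast
  then show "I = {\<zero>} \<or> (\<exists>n::nat. n \<ge> 1 \<and> I = PIdl (p [^] n))"
  proof (elim disjE exE)
    fix n :: nat assume "I = PIdl (p [^] n)"
    moreover from calculation have "n \<noteq> 0" using \<open>I \<noteq> PIdl (p [^] (0::nat))\<close> by auto
    ultimately have "n \<ge> 1 \<and> I = PIdl (p [^] n)" by simp
    then show ?thesis by blast
  qed simp
next
  have "\<one> \<notin> PIdl p"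
    using ideal.one_imp_carrier[OF cgenideal_ideal[OF p_closed]]
      maximalideal.I_notcarr[OF maximalideal_PIdl_p] by auto
  then have "PIdl (p [^] n) \<noteq> carrier R" if "n \<ge> 1" for n :: nat
    using PIdl_pow_antimono[OF that] p_closed by auto
  moreover have "{\<zero>} \<noteq> carrier R" using one_not_zero one_closed by blast
  moreover assume "I = {\<zero>} \<or> (\<exists>n::nat. n \<ge> 1 \<and> I = PIdl (p [^] n))"
  ultimately show "ideal I R \<and> I \<noteq> carrier R"
    using zeroideal cgenideal_ideal[OF nat_pow_closed[OF p_closed]] by auto
qed

lemma proper_ideal_subset_PIdl_p:
  assumes "ideal I R" "I \<noteq> carrier R"
  shows "I \<subseteq> PIdl p"
proof -
  have "I = {\<zero>} \<or> (\<exists>n::nat. n \<ge> 1 \<and> I = PIdl (p [^] n))"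
    using proper_ideal_iff assms by blast
  moreover have "\<zero> \<in> PIdl p"
    using additive_subgroup.zero_closed[OF ideal.axioms(1)[OF cgenideal_ideal[OF p_closed]]] .
  moreover have "PIdl (p [^] n) \<subseteq> PIdl p" if "n \<ge> 1" for n :: nat
    using PIdl_pow_antimono[OF that] p_closed by simp
  ultimately show ?thesis by auto
qed

lemma nonunit_in_PIdl_p:
  assumes "a \<in> carrier R" "a \<notin> Units R"
  shows "a \<in> PIdl p"
  using proper_ideal_subset_PIdl_p[OF cgenideal_ideal[OF assms(1)]] ideal_eq_carrier_iff[OF assms(1)]
    cgenideal_self[OF assms(1)] assms(2) by auto

lemma ideals_linear:
  assumes "ideal I R" "ideal J R"
  shows "I \<subseteq> J \<or> J \<subseteq> I"
proof -
  have zero: "\<zero> \<in> K" if "ideal K R" for K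
    using additive_subgroup.zero_closed[OF ideal.axioms(1)[OF that]] .
  consider "I = {\<zero>}" | "J = {\<zero>}" | i j :: nat where "I = PIdl (p [^] i)" "J = PIdl (p [^] j)"
    using ideal_eq_zero_or_PIdl_pow assms by blast
  then show ?thesis
  proof cases
    case 3
    then show ?thesis using PIdl_pow_antimono[of i j] PIdl_pow_antimono[of j i] by (cases "i \<le> j") auto
  qed (use zero assms in auto)
qed

lemma divides_total:
  assumes "a \<in> carrier R" "b \<in> carrier R"
  shows "a divides b \<or> b divides a"
  using ideals_linear[OF cgenideal_ideal[OF assms(1)] cgenideal_ideal[OF assms(2)]]
    to_contain_is_to_divide[OF assms] to_contain_is_to_divide[OF assms(2,1)] by blast

lemma two_absorbing_primary_proper_ideal:
  assumes I: "ideal I R" "I \<noteq> carrier R"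
  shows "two_absorbing_primary R I"
proof -
  have "x \<otimes> y \<in> I \<or> x \<otimes> z \<in> ideal_radical R I \<or> y \<otimes> z \<in> ideal_radical R I"
    if xyz: "x \<in> carrier R" "y \<in> carrier R" "z \<in> carrier R" "x \<otimes> y \<otimes> z \<in> I" for x y z
  proof -
    consider "I = {\<zero>}" | n :: nat where "n \<ge> 1" "I = PIdl (p [^] n)"
      using proper_ideal_iff I by blast
    then show ?thesis
    proof cases
      case 1
      then have "x \<otimes> y = \<zero> \<or> z = \<zero>" using xyz integral[of "x \<otimes> y" z] by auto
      moreover have "I \<subseteq> ideal_radical R I" using subset_ideal_radical[of "{\<zero>}"] 1 by simp
      ultimately show ?thesis using 1 xyz by auto
    next
      case 2
      show ?thesis
      proof (cases "z \<in> PIdl p")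
        case True
        then have "x \<otimes> z \<in> PIdl p" using ideal.I_l_closed[OF cgenideal_ideal[OF p_closed]] xyz(1) by blast
        then show ?thesis using PIdl_subset_radical_PIdl_pow[OF p_closed] 2 by blast
      next
        case False
        then have "z \<in> Units R" using nonunit_in_PIdl_p xyz(3) by blast
        then have "x \<otimes> y = (x \<otimes> y \<otimes> z) \<otimes> inv z" using xyz by (simp add: m_assoc)
        moreover have "(x \<otimes> y \<otimes> z) \<otimes> inv z \<in> I"
          using ideal.I_r_closed[OF I(1) xyz(4)] \<open>z \<in> Units R\<close> by simp
        ultimately show ?thesis by simp
      qed
    qed
  qed
  then show ?thesis unfolding two_absorbing_primary_def using I by blast
qed

lemma pseudo_absorbing_primary_iff:
  assumes "module R M"
  shows "pseudo_absorbing_primary R M N \<longleftrightarrow> submodule N R M \<and> N \<noteq> carrier M"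
proof -
  interpret module R M by fact
  show ?thesis
    unfolding pseudo_absorbing_primary_def
    using two_absorbing_primary_proper_ideal ideal_module_colon module_colon_eq_carrier_iff by blast
qed

lemma pap_multiplication_module_iff:
  assumes "module R M"
  shows "pap_multiplication_module R M \<longleftrightarrow> multiplication_module R M"
proof -
  interpret module R M by fact
  show ?thesis
    unfolding pap_multiplication_module_def pseudo_absorbing_primary_iff[OF assms]
    using multiplication_moduleI unfolding multiplication_module_def by blast
qed

lemma ideal_times_module_eq_carrier_if_divisible:
  assumes "module R M" and divisible: "carrier M \<subseteq> ideal_times_module R (PIdl p) M"
    and I: "ideal I R" "I \<noteq> {\<zero>}"
  shows "ideal_times_module R I M = carrier M"
proof -
  interpret module R M by fact
  have "ideal_times_module R (PIdl p) M \<subseteq> carrier M"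
    using ideal_times_module_subset_carrier ideal.Icarr[OF cgenideal_ideal[OF p_closed]] by blast
  with divisible have "(\<lambda>x. p \<odot>\<^bsub>M\<^esub> x) ` carrier M = carrier M"
    using ideal_times_module_PIdl[OF p_closed] by simp
  then have "ideal_times_module R (PIdl (p [^] n)) M = carrier M" for n :: nat
    using smult_image_pow_eq_carrier[OF p_closed] ideal_times_module_PIdl[OF nat_pow_closed[OF p_closed]]
    by simp
  then show ?thesis using ideal_eq_zero_or_PIdl_pow[OF I(1)] I(2) by auto
qed

lemma multiplication_module_cyclic:
  assumes mult: "multiplication_module R M" and nonzero: "carrier M \<noteq> {\<zero>\<^bsub>M\<^esub>}"
  shows "\<exists>m. cyclic_generator R M m"
proof -
  interpret module R M using mult unfolding multiplication_module_def by blast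
  let ?pM = "ideal_times_module R (PIdl p) M"
  show ?thesis
  proof (cases "carrier M \<subseteq> ?pM")
    case False
    then obtain m where m: "m \<in> carrier M" "m \<notin> ?pM" by blast
    have "ideal_times_module R I M = carrier M" if I: "ideal I R" "m \<in> ideal_times_module R I M" for I
    proof (rule ccontr)
      assume "ideal_times_module R I M \<noteq> carrier M"
      then have "I \<noteq> carrier R" using ideal_times_module_carrier by auto
      then have "ideal_times_module R I M \<subseteq> ?pM"
        by (rule ideal_times_module_mono[OF proper_ideal_subset_PIdl_p[OF I(1)]])
      then show False using m(2) I(2) by blast
    qed
    then show ?thesis using multiplication_module_cyclic_generatorI[OF mult m(1)] by blast
  next
    case True
    obtain m where m: "m \<in> carrier M" "m \<noteq> \<zero>\<^bsub>M\<^esub>" using nonzero M.zero_closed by blast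
    have "ideal_times_module R I M = carrier M" if I: "ideal I R" "m \<in> ideal_times_module R I M" for I
    proof (cases "I = {\<zero>}")
      case True
      then have "ideal_times_module R I M \<subseteq> {\<zero>\<^bsub>M\<^esub>}"
        by (intro ideal_times_module_least[OF zero_submodule]) simp
      then show ?thesis using m I(2) by auto
    qed (rule ideal_times_module_eq_carrier_if_divisible[OF module_axioms \<open>carrier M \<subseteq> ?pM\<close> I(1)])
    then show ?thesis using multiplication_module_cyclic_generatorI[OF mult m(1)] by blast
  qed
qed

lemma indecomposable_pap_multiplication_iff:
  assumes "module R M"
  shows "indecomposable_module R M \<and> pap_multiplication_module R M \<longleftrightarrow>
    (\<exists>m. cyclic_generator R M m) \<and> carrier M \<noteq> {\<zero>\<^bsub>M\<^esub>}"
proof -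
  interpret module R M by fact
  show ?thesis
  proof
    assume "indecomposable_module R M \<and> pap_multiplication_module R M"
    then have "multiplication_module R M" "carrier M \<noteq> {\<zero>\<^bsub>M\<^esub>}"
      using pap_multiplication_module_iff[OF assms] unfolding indecomposable_module_def by auto
    then show "(\<exists>m. cyclic_generator R M m) \<and> carrier M \<noteq> {\<zero>\<^bsub>M\<^esub>}"
      using multiplication_module_cyclic by blast
  next
    assume "(\<exists>m. cyclic_generator R M m) \<and> carrier M \<noteq> {\<zero>\<^bsub>M\<^esub>}"
    then obtain m where m: "cyclic_generator R M m" and "carrier M \<noteq> {\<zero>\<^bsub>M\<^esub>}" by blast
    moreover have "\<forall>a\<in>carrier R. \<forall>b\<in>carrier R. a divides b \<or> b divides a"
      using divides_total by blast
    ultimately show "indecomposable_module R M \<and> pap_multiplication_module R M"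
      using cyclic_indecomposable cyclic_multiplication_module[OF m]
        pap_multiplication_module_iff[OF assms] by blast
  qed
qed

end

theorem theorem2p6:
  fixes R :: "('a, 'c) ring_scheme" and p :: 'a and M :: "('a, 'b, 'd) module_scheme"
  assumes "DVR R" and "p \<in> carrier R" and "maximalideal (PIdl\<^bsub>R\<^esub> p) R"
    and "module R M"
  shows "(indecomposable_module R M \<and> pap_multiplication_module R M) \<longleftrightarrow>
           (module_iso R M (self_module R) \<or>
            (\<exists>n::nat. n \<ge> 1 \<and> module_iso R M (quot_module R (PIdl\<^bsub>R\<^esub> (p [^]\<^bsub>R\<^esub> n)))))"
proof -
  interpret dvr R p using DVR_imp_dvr[OF assms(1-3)] .
  interpret module R M by fact
  let ?ann = "module_colon R M {\<zero>\<^bsub>M\<^esub>}"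
  have ideal_p_pow: "ideal (PIdl\<^bsub>R\<^esub> (p [^]\<^bsub>R\<^esub> n)) R" for n :: nat
    using cgenideal_ideal[OF nat_pow_closed[OF p_closed]] .
  have iso_self: "module_iso R M (self_module R) \<longleftrightarrow> (\<exists>m. cyclic_generator R M m) \<and> ?ann = {\<zero>\<^bsub>R\<^esub>}"
    by (rule module_iso_iff_cyclic[OF linear_quotient_map_self_module zeroideal])
  have iso_quot: "module_iso R M (quot_module R (PIdl\<^bsub>R\<^esub> (p [^]\<^bsub>R\<^esub> n))) \<longleftrightarrow>
      (\<exists>m. cyclic_generator R M m) \<and> ?ann = PIdl\<^bsub>R\<^esub> (p [^]\<^bsub>R\<^esub> n)" for n :: nat
    using module_iso_iff_cyclic[OF linear_quotient_map_quot_module[OF ideal_p_pow] ideal_p_pow] .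
  have "carrier M \<noteq> {\<zero>\<^bsub>M\<^esub>} \<longleftrightarrow> ideal ?ann R \<and> ?ann \<noteq> carrier R"
    using module_colon_eq_carrier_iff[OF zero_submodule] ideal_module_colon[OF zero_submodule] by auto
  also have "\<dots> \<longleftrightarrow> ?ann = {\<zero>\<^bsub>R\<^esub>} \<or> (\<exists>n::nat. n \<ge> 1 \<and> ?ann = PIdl\<^bsub>R\<^esub> (p [^]\<^bsub>R\<^esub> n))"
    by (rule proper_ideal_iff)
  finally show ?thesis
    using indecomposable_pap_multiplication_iff[OF assms(4)] iso_self iso_quot by blast
qed

end
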